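(* Under the standing assumptions: (i) $\Lambda=\operatorname{epi}(f-\operatorname{eco}g+\delta_A)^c$; (ii) $\Omega=\bigcup_{(x^*,y^*,\alpha)\in\operatorname{dom}\delta_A^c}\operatorname{epi}\big(f-\operatorname{eco}g-c(\cdot,(-x^*,-y^*,\alpha))-\delta_A^c(x^*,y^*,\alpha)\big)^c$.
   Context: Let $X$ be a nontrivial separated locally convex space with topological dual $X^*$, endowed with the topology $\sigma(X,X^* )$; $\langle x,x^*\rangle$ is the value of $x^*\in X^*$ at $x\in X$. Put $W:=X^*\times X^*\times\mathbb{R}$. For $y^*\in X^*$, $\alpha\in\mathbb{R}$, let $H^-_{y^*,\alpha}:=\{x\in X:\langle x,y^*\rangle<\alpha\}$. The coupling function $c:X\times W\to\overline{\mathbb{R}}$ is $c(x,(x^*,y^*,\alpha)):=\langle x,x^*\rangle$ if $\langle x,y^*\rangle<\alpha$ and $:=+\infty$ otherwise. For $h:X\to\overline{\mathbb{R}}$ its $c$-conjugate is $h^c:W\to\overline{\mathbb{R}}$, $h^c(w):=\sup_{x\in X}\{c(x,w)-h(x)\}$, with the convention $(+\infty)+(-\infty)=(-\infty)+(+\infty)=(+\infty)-(+\infty)=(-\infty)-(-\infty)=-\infty$. Epigraphs of functions on $W$ are subsets of $W\times\mathbb{R}$. $\delta_A$ is the indicator function of $A$. For $E\subseteq W\times\mathbb{R}$ and $e\in W\times\mathbb{R}$, $E-e:=\{z-e:z\in E\}$. A set $C\subseteq X\times\mathbb{R}$ is e-convex if for every point $p\notin C$ there is a continuous linear functional $\ell$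 on $X\times\mathbb{R}$ with $\ell(q-p)<0$ for all $q\in C$; a function is e-convex if its epigraph is e-convex, and $\operatorname{eco}g$ is the largest e-convex minorant of $g$ (it equals $\sup_{(u^*,v^*,\gamma)\in\operatorname{dom}g^c}\{c(\cdot,(u^*,v^*,\gamma))-g^c(u^*,v^*,\gamma)\}$ when $g$ has a proper e-convex minorant). Standing assumptions: $f,g:X\to\overline{\mathbb{R}}$ proper convex with $\operatorname{dom}f\subseteq\operatorname{dom}g$, $A\subseteq X$ nonempty, convention $(+\infty)-(+\infty)=+\infty$ in differences $f-g$, $f-\operatorname{eco}g$. Sets: $\Lambda:=\bigcap_{(u^*,v^*,\gamma)\in\operatorname{dom}g^c}\Big[\operatorname{epi}(f+\delta_A)^c-\big(u^*,0,0,g^c(u^*,v^*,\gamma)\big)\Big]$, $\Omega:=\bigcup_{(x^*,y^*,\alpha)\in\operatorname{dom}\delta_A^c}\ \bigcap_{(u^*,v^*,\gamma)\in\operatorname{dom}g^c}\Big[\operatorname{epi}\big(f-c(\cdot,(-x^*,-y^*,\alpha))\big)^c-\big(u^*,0,0,g^c(u^*,v^*,\gamma)-\delta_A^c(x^*,y^*,\alpha)\big)\Big]$. *)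

theory Defs
  imports "HOL-Analysis.Analysis" "HOL-Library.Extended_Real"
begin

text \<open>Dual pair model: X is a real vector space of type 'x, and D is the
  topological dual X^* (a point-separating linear subspace of linear functionals);
  X carries sigma(X,X^*), whose continuous linear functionals are exactly D.\<close>

definition dual_pair :: "('x::real_vector \<Rightarrow> real) set \<Rightarrow> bool" where
  "dual_pair D \<longleftrightarrow> (\<forall>\<phi>\<in>D. linear \<phi>) \<and> (\<lambda>x. 0) \<in> D
     \<and> (\<forall>\<phi>\<in>D. \<forall>\<psi>\<in>D. (\<lambda>x. \<phi> x + \<psi> x) \<in> D)
     \<and> (\<forall>\<phi>\<in>D. \<forall>a::real. (\<lambda>x. a * \<phi> x) \<in> D)
     \<and> (\<forall>x. x \<noteq> 0 \<longrightarrow> (\<exists>\<phi>\<in>D. \<phi> x \<noteq> 0))"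

type_synonym 'x W = "('x \<Rightarrow> real) \<times> ('x \<Rightarrow> real) \<times> real"

definition Wset :: "('x \<Rightarrow> real) set \<Rightarrow> 'x W set" where
  "Wset D = D \<times> D \<times> UNIV"

text \<open>Lower subtraction: (+inf)-(+inf) = (-inf)-(-inf) = -inf (used in conjugates).\<close>
definition lsub :: "ereal \<Rightarrow> ereal \<Rightarrow> ereal" where
  "lsub a b = (if (a = \<infinity> \<and> b = \<infinity>) \<or> (a = -\<infinity> \<and> b = -\<infinity>) then -\<infinity>
               else if a = \<infinity> \<or> b = -\<infinity> then \<infinity>
               else if a = -\<infinity> \<or> b = \<infinity> then -\<infinity>
               else ereal (real_of_ereal a - real_of_ereal b))"

text \<open>Upper subtraction: (+inf)-(+inf) = (-inf)-(-inf) = +inf (used in f - g etc.).\<close>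
definition usub :: "ereal \<Rightarrow> ereal \<Rightarrow> ereal" where
  "usub a b = (if (a = \<infinity> \<and> b = \<infinity>) \<or> (a = -\<infinity> \<and> b = -\<infinity>) then \<infinity>
               else if a = \<infinity> \<or> b = -\<infinity> then \<infinity>
               else if a = -\<infinity> \<or> b = \<infinity> then -\<infinity>
               else ereal (real_of_ereal a - real_of_ereal b))"

definition coup :: "'x \<Rightarrow> 'x W \<Rightarrow> ereal" where
  "coup x w = (case w of (xs, ys, \<alpha>) \<Rightarrow> if ys x < \<alpha> then ereal (xs x) else \<infinity>)"

definition cconj :: "('x \<Rightarrow> ereal) \<Rightarrow> 'x W \<Rightarrow> ereal" where
  "cconj h w = (SUP x. lsub (coup x w) (h x))"

definition indic :: "'x set \<Rightarrow> 'x \<Rightarrow> ereal" where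
  "indic A x = (if x \<in> A then 0 else \<infinity>)"

definition domX :: "('x \<Rightarrow> ereal) \<Rightarrow> 'x set" where
  "domX h = {x. h x < \<infinity>}"

definition domW :: "('x \<Rightarrow> real) set \<Rightarrow> ('x W \<Rightarrow> ereal) \<Rightarrow> 'x W set" where
  "domW D k = {w \<in> Wset D. k w < \<infinity>}"

definition epiW :: "('x \<Rightarrow> real) set \<Rightarrow> ('x W \<Rightarrow> ereal) \<Rightarrow> ('x W \<times> real) set" where
  "epiW D k = {(w, r). w \<in> Wset D \<and> k w \<le> ereal r}"

definition shiftW :: "('x W \<times> real) set \<Rightarrow> ('x \<Rightarrow> real) \<Rightarrow> real \<Rightarrow> ('x W \<times> real) set" where
  "shiftW E u r = (\<lambda>((a, b, t), s). ((a - u, b, t), s - r)) ` E"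

definition proper_fn :: "('x \<Rightarrow> ereal) \<Rightarrow> bool" where
  "proper_fn f \<longleftrightarrow> (\<forall>x. f x \<noteq> -\<infinity>) \<and> (\<exists>x. f x \<noteq> \<infinity>)"

definition convex_fn :: "('x::real_vector \<Rightarrow> ereal) \<Rightarrow> bool" where
  "convex_fn f \<longleftrightarrow> (\<forall>x y (r::real) (s::real) (t::real). f x \<le> ereal r \<longrightarrow> f y \<le> ereal s
      \<longrightarrow> 0 \<le> t \<longrightarrow> t \<le> 1 \<longrightarrow> f (t *\<^sub>R x + (1 - t) *\<^sub>R y) \<le> ereal (t * r + (1 - t) * s))"

definition epiX :: "('x \<Rightarrow> ereal) \<Rightarrow> ('x \<times> real) set" where
  "epiX h = {(x, r). h x \<le> ereal r}"

text \<open>e-convex sets in X x R: continuous linear functionals on X x R (with sigma(X,X^*)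
  times the usual topology) are (x,t) |-> phi x + a t with phi in D.\<close>
definition econvex_set :: "('x::real_vector \<Rightarrow> real) set \<Rightarrow> ('x \<times> real) set \<Rightarrow> bool" where
  "econvex_set D C \<longleftrightarrow> (\<forall>p. p \<notin> C \<longrightarrow> (\<exists>\<phi>\<in>D. \<exists>a::real.
      \<forall>q\<in>C. \<phi> (fst q - fst p) + a * (snd q - snd p) < 0))"

definition econvex_fn :: "('x::real_vector \<Rightarrow> real) set \<Rightarrow> ('x \<Rightarrow> ereal) \<Rightarrow> bool" where
  "econvex_fn D h \<longleftrightarrow> econvex_set D (epiX h)"

definition eco :: "('x::real_vector \<Rightarrow> real) set \<Rightarrow> ('x \<Rightarrow> ereal) \<Rightarrow> 'x \<Rightarrow> ereal" where
  "eco D g = (\<lambda>x. SUP h \<in> {h. econvex_fn D h \<and> h \<le> g}. h x)"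

definition Lambda_set :: "('x::real_vector \<Rightarrow> real) set \<Rightarrow> ('x \<Rightarrow> ereal) \<Rightarrow> ('x \<Rightarrow> ereal)
    \<Rightarrow> 'x set \<Rightarrow> ('x W \<times> real) set" where
  "Lambda_set D f g A = (Wset D \<times> UNIV) \<inter>
     (\<Inter>w \<in> domW D (cconj g). case w of (u, v, \<gamma>) \<Rightarrow>
        shiftW (epiW D (cconj (\<lambda>x. f x + indic A x))) u (real_of_ereal (cconj g w)))"

definition Omega_set :: "('x::real_vector \<Rightarrow> real) set \<Rightarrow> ('x \<Rightarrow> ereal) \<Rightarrow> ('x \<Rightarrow> ereal)
    \<Rightarrow> 'x set \<Rightarrow> ('x W \<times> real) set" where
  "Omega_set D f g A = (\<Union>z \<in> domW D (cconj (indic A)). case z of (xs, ys, \<alpha>) \<Rightarrow>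
     (Wset D \<times> UNIV) \<inter>
     (\<Inter>w \<in> domW D (cconj g). case w of (u, v, \<gamma>) \<Rightarrow>
        shiftW (epiW D (cconj (\<lambda>x. usub (f x) (coup x (-xs, -ys, \<alpha>)))))
           u (real_of_ereal (cconj g w) - real_of_ereal (cconj (indic A) z))))"

end

theory Submission
  imports Defs
begin

text \<open>Both identities are instances of one set equation: for \<open>\<phi>\<close> with
  \<open>dom \<phi> \<subseteq> dom g\<close> and real \<open>K\<close>, intersecting the shifts of \<open>epi \<phi>\<^sup>c\<close> by
  \<open>(u, 0, 0, g\<^sup>c(u, v, \<gamma>) - K)\<close> over \<open>dom g\<^sup>c\<close> gives \<open>epi ((\<phi> - eco g) - K)\<^sup>c\<close>.
  Pointwise this is the representation \<open>eco g x = sup (c(x, w) - g\<^sup>c(w))\<close> over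
  \<open>w \<in> dom g\<^sup>c\<close>, for \<open>x \<in> dom g\<close>: every \<open>c(\<cdot>, w) - g\<^sup>c(w)\<close> is an e-convex
  minorant of \<open>g\<close>, and conversely a point strictly below the epigraph of an e-convex
  minorant is separated by a non-vertical functional, which normalises to an affine
  minorant of \<open>g\<close> (the coupling with \<open>y\<^sup>* = 0, \<alpha> = 1\<close>) reaching that point.\<close>

lemma lsub_PInf_right [simp]: "lsub a \<infinity> = -\<infinity>"
  by (cases a) (auto simp: lsub_def)

lemma lsub_MInf_right [simp]: "a \<noteq> -\<infinity> \<Longrightarrow> lsub a (-\<infinity>) = \<infinity>"
  by (cases a) (auto simp: lsub_def)

lemma lsub_PInf_ereal [simp]: "lsub \<infinity> (ereal r) = \<infinity>"
  by (simp add: lsub_def)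

lemma lsub_ereal [simp]: "lsub (ereal a) (ereal b) = ereal (a - b)"
  by (simp add: lsub_def)

lemma usub_PInf_left [simp]: "usub \<infinity> b = \<infinity>"
  by (cases b) (auto simp: usub_def)

lemma usub_MInf_right [simp]: "usub a (-\<infinity>) = \<infinity>"
  by (cases a) (auto simp: usub_def)

lemma usub_MInf_ereal [simp]: "usub (-\<infinity>) (ereal b) = -\<infinity>"
  by (simp add: usub_def)

lemma usub_ereal [simp]: "usub (ereal a) (ereal b) = ereal (a - b)"
  by (simp add: usub_def)

lemma usub_commute:
  assumes "a \<noteq> -\<infinity>" "c \<noteq> -\<infinity>" "a \<noteq> \<infinity> \<Longrightarrow> e \<noteq> \<infinity>"
  shows "usub (usub a c) e = usub (usub a e) c"
  using assms by (cases a; cases c; cases e) (auto simp: usub_def)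

lemma coup_simp [simp]: "coup x (a, b, t) = (if b x < t then ereal (a x) else \<infinity>)"
  by (simp add: coup_def)

lemma coup_ne_MInf [simp]: "coup x w \<noteq> -\<infinity>"
  by (cases w) (auto simp: coup_def)

lemma cconj_le_iff: "cconj h w \<le> B \<longleftrightarrow> (\<forall>x. lsub (coup x w) (h x) \<le> B)"
  by (simp add: cconj_def SUP_le_iff)

lemma cconj_upper: "lsub (coup x w) (h x) \<le> cconj h w"
  unfolding cconj_def by (rule SUP_upper) simp

lemma cconj_ne_MInf:
  assumes "h x = ereal r"
  shows "cconj h w \<noteq> -\<infinity>"
proof -
  have "lsub (coup x w) (h x) \<noteq> -\<infinity>"
    using assms coup_ne_MInf[of x w] by (cases "coup x w") auto
  then show ?thesis using cconj_upper[of x w h] by auto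
qed

lemma domW_cconj_real:
  assumes "w \<in> domW D (cconj h)" and "h x = ereal r"
  obtains \<Gamma> where "cconj h w = ereal \<Gamma>"
  using assms cconj_ne_MInf[of h x r w] by (cases "cconj h w") (auto simp: domW_def)

lemma shiftW_mem:
  "((p, q, b), r) \<in> shiftW E u K \<longleftrightarrow> (((\<lambda>x. p x + u x), q, b), r + K) \<in> E"
proof
  assume "((p, q, b), r) \<in> shiftW E u K"
  then obtain a where "((a, q, b), r + K) \<in> E" "a - u = p"
    by (auto simp: shiftW_def)
  moreover have "a = (\<lambda>x. p x + u x)"
    using \<open>a - u = p\<close> by (auto simp: fun_eq_iff algebra_simps)
  ultimately show "(((\<lambda>x. p x + u x), q, b), r + K) \<in> E" by simp
next
  assume "(((\<lambda>x. p x + u x), q, b), r + K) \<in> E"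
  moreover have "(\<lambda>x. p x + u x) - u = p" by (auto simp: fun_eq_iff)
  ultimately show "((p, q, b), r) \<in> shiftW E u K"
    unfolding shiftW_def by (force intro: image_eqI)
qed

lemma eco_le: "eco D g x \<le> g x"
  unfolding eco_def by (rule SUP_least) (auto simp: le_fun_def)

lemma eco_ge: "econvex_fn D h \<Longrightarrow> h \<le> g \<Longrightarrow> h x \<le> eco D g x"
  unfolding eco_def by (rule SUP_upper) simp

lemma econvex_fn_coup_minus_const:
  assumes "dual_pair D" and "u \<in> D" and "v \<in> D"
  shows "econvex_fn D (\<lambda>y. lsub (coup y (u, v, \<gamma>)) (ereal \<Gamma>))"
  unfolding econvex_fn_def econvex_set_def
proof (intro allI impI)
  fix p assume p: "p \<notin> epiX (\<lambda>y. lsub (coup y (u, v, \<gamma>)) (ereal \<Gamma>))"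
  obtain x0 s0 where p0: "p = (x0, s0)" by (cases p)
  have lin: "linear u" "linear v" using assms by (auto simp: dual_pair_def)
  have epi: "v y < \<gamma> \<and> u y - \<Gamma> \<le> s"
    if "(y, s) \<in> epiX (\<lambda>y. lsub (coup y (u, v, \<gamma>)) (ereal \<Gamma>))" for y s
    using that by (auto simp: epiX_def split: if_splits)
  show "\<exists>\<phi>\<in>D. \<exists>a. \<forall>q\<in>epiX (\<lambda>y. lsub (coup y (u, v, \<gamma>)) (ereal \<Gamma>)).
          \<phi> (fst q - fst p) + a * (snd q - snd p) < 0"
  proof (cases "v x0 < \<gamma>")
    case True
    then have "s0 < u x0 - \<Gamma>" using p p0 by (auto simp: epiX_def)
    then have "\<forall>q\<in>epiX (\<lambda>y. lsub (coup y (u, v, \<gamma>)) (ereal \<Gamma>)).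
                 u (fst q - fst p) + (-1) * (snd q - snd p) < 0"
      using epi p0 linear_diff[OF lin(1)] by fastforce
    then show ?thesis using assms(2) by blast
  next
    case False
    then have "\<forall>q\<in>epiX (\<lambda>y. lsub (coup y (u, v, \<gamma>)) (ereal \<Gamma>)).
                 v (fst q - fst p) + 0 * (snd q - snd p) < 0"
      using epi p0 linear_diff[OF lin(2)] by fastforce
    then show ?thesis using assms(3) by blast
  qed
qed

lemma coup_minus_cconj_le_eco:
  assumes "dual_pair D" and "w \<in> domW D (cconj g)" and "cconj g w = ereal \<Gamma>"
  shows "lsub (coup x w) (ereal \<Gamma>) \<le> eco D g x"
proof -
  obtain u v \<gamma> where w: "w = (u, v, \<gamma>)" by (metis prod.exhaust)
  have "lsub (coup y w) (ereal \<Gamma>) \<le> g y" for y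
  proof (cases "g y")
    case MInf
    then show ?thesis using assms(3) cconj_upper[of y w g] by simp
  qed (use assms(3) cconj_upper[of y w g] in \<open>auto simp: w split: if_splits\<close>)
  moreover have "econvex_fn D (\<lambda>y. lsub (coup y w) (ereal \<Gamma>))"
    using assms(1,2) econvex_fn_coup_minus_const by (auto simp: w domW_def Wset_def)
  ultimately show ?thesis by (intro eco_ge) (auto simp: le_fun_def)
qed

lemma affine_minorant_above_eco:
  assumes "dual_pair D" and "proper_fn g" and "g x0 < \<infinity>" and "ereal t < eco D g x0"
  shows "\<exists>\<psi>\<in>D. cconj g (\<psi>, (\<lambda>x. 0), 1) \<le> ereal (\<psi> x0 - t)"
proof -
  from assms(4) obtain h where h: "econvex_fn D h" "h \<le> g" "ereal t < h x0"
    unfolding eco_def by (auto simp: less_SUP_iff)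
  obtain s0 where s0: "h x0 = ereal s0"
    using le_funD[OF h(2), of x0] assms(3) h(3) by (cases "h x0") auto
  have "(x0, t) \<notin> epiX h" using h(3) by (auto simp: epiX_def)
  then obtain \<phi> a where \<phi>: "\<phi> \<in> D"
    and sep: "\<And>y s. h y \<le> ereal s \<Longrightarrow> \<phi> (y - x0) + a * (s - t) < 0"
    using h(1) unfolding econvex_fn_def econvex_set_def epiX_def by fastforce
  have lin: "linear \<phi>" using assms(1) \<phi> by (auto simp: dual_pair_def)
  \<comment> \<open>The point of the epigraph above x0 forces the separating functional to be non-vertical.\<close>
  have "a * (s0 - t) < 0" using sep[of x0 s0] s0 linear_0[OF lin] by simp
  moreover have "t < s0" using h(3) s0 by simp
  ultimately have a: "a < 0" by (simp add: mult_less_0_iff)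
  define \<psi> where "\<psi> = (\<lambda>x. (-1/a) * \<phi> x)"
  have "\<psi> \<in> D" using assms(1) \<phi> unfolding dual_pair_def \<psi>_def by blast
  moreover have "lsub (coup x (\<psi>, \<lambda>x. 0, 1)) (g x) \<le> ereal (\<psi> x0 - t)" for x
  proof (cases "g x")
    case (real gx)
    then have "\<phi> x - \<phi> x0 + a * (gx - t) < 0"
      using sep[of x gx] le_funD[OF h(2), of x] linear_diff[OF lin] by simp
    then have "\<phi> x - \<phi> x0 < (gx - t) * (-a)" by (simp add: algebra_simps)
    then have "(\<phi> x - \<phi> x0) / (-a) < gx - t"
      using a pos_divide_less_eq[of "-a"] by simp
    moreover have "\<psi> x - \<psi> x0 = (\<phi> x - \<phi> x0) / (-a)"
      using a by (simp add: \<psi>_def field_simps)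
    ultimately have "\<psi> x - gx \<le> \<psi> x0 - t" by linarith
    then show ?thesis using real by simp
  next
    case MInf
    then show ?thesis using assms(2) by (simp add: proper_fn_def)
  qed simp
  ultimately show ?thesis by (auto simp: cconj_le_iff)
qed

lemma mem_inter_shiftW_epiW_iff:
  assumes "dual_pair D"
  shows "((p, q, \<beta>), r) \<in> (Wset D \<times> UNIV) \<inter> (\<Inter>w \<in> domW D (cconj g). case w of (u, v, \<gamma>) \<Rightarrow>
            shiftW (epiW D h) u (real_of_ereal (cconj g w) - K))
    \<longleftrightarrow> (p, q, \<beta>) \<in> Wset D \<and> (\<forall>u v \<gamma>. (u, v, \<gamma>) \<in> domW D (cconj g) \<longrightarrow>
          h ((\<lambda>x. p x + u x), q, \<beta>) \<le> ereal (r + (real_of_ereal (cconj g (u, v, \<gamma>)) - K)))"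
  using assms by (auto simp: shiftW_mem epiW_def Wset_def domW_def dual_pair_def)

lemma lsub_coup_le_of_eco:
  assumes "ereal (u x - \<Gamma>) \<le> e" and "e \<noteq> \<infinity>"
    and "lsub (coup x (p, q, \<beta>)) (usub (usub a e) (ereal K)) \<le> ereal r"
  shows "lsub (coup x ((\<lambda>y. p y + u y), q, \<beta>)) a \<le> ereal (r + (\<Gamma> - K))"
  using assms by (cases a; cases e) (auto split: if_splits)

lemma lsub_coup_eco_le_of_conj_bounds:
  assumes "dual_pair D" and "proper_fn g" and "g x < \<infinity>" and "a \<noteq> \<infinity>"
    and bounds: "\<And>u v \<gamma>. (u, v, \<gamma>) \<in> domW D (cconj g) \<Longrightarrow>
      lsub (coup x ((\<lambda>y. p y + u y), q, \<beta>)) a \<le> ereal (r + (real_of_ereal (cconj g (u, v, \<gamma>)) - K))"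
  shows "lsub (coup x (p, q, \<beta>)) (usub (usub a (eco D g x)) (ereal K)) \<le> ereal r"
proof (cases "eco D g x")
  case PInf
  then show ?thesis using eco_le[of D g x] assms(3) by simp
next
  case (real E)
  obtain gx where gx: "g x = ereal gx"
    using assms(2,3) by (cases "g x") (auto simp: proper_fn_def)
  \<comment> \<open>Test the bounds against affine minorants of \<open>g\<close> reaching up to \<open>eco g x\<close>.\<close>
  have bound: "\<exists>P. a = ereal P \<and> q x < \<beta> \<and> p x - P + t + K \<le> r" if t: "t < E" for t
  proof -
    obtain \<psi> where \<psi>: "\<psi> \<in> D" "cconj g (\<psi>, \<lambda>x. 0, 1) \<le> ereal (\<psi> x - t)"
      using affine_minorant_above_eco[OF assms(1-3)] t real by auto
    have dom: "(\<psi>, \<lambda>x. 0, 1) \<in> domW D (cconj g)"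
      using \<psi> assms(1) by (auto simp: domW_def Wset_def dual_pair_def)
    then obtain G where G: "cconj g (\<psi>, \<lambda>x. 0, 1) = ereal G"
      using domW_cconj_real gx by metis
    have "lsub (coup x ((\<lambda>y. p y + \<psi> y), q, \<beta>)) a \<le> ereal (r + (G - K))"
      using bounds[OF dom] G by simp
    then show ?thesis using \<psi>(2) G assms(4) by (cases a) (auto split: if_splits)
  qed
  obtain P where P: "a = ereal P" "q x < \<beta>" using bound[of "E - 1"] by auto
  have "E \<le> r - p x + P - K"
  proof (rule dense_le)
    fix t assume "t < E"
    then show "t \<le> r - p x + P - K" using bound[of t] P by auto
  qed
  then show ?thesis using P real by simp
qed simp

lemma inter_shiftW_epiW_cconj_eq_epiW_cconj_diff_eco:
  assumes "dual_pair D" and "proper_fn g" and dom: "\<And>x. \<phi> x < \<infinity> \<Longrightarrow> g x < \<infinity>"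
  shows "(Wset D \<times> UNIV) \<inter> (\<Inter>w \<in> domW D (cconj g). case w of (u, v, \<gamma>) \<Rightarrow>
            shiftW (epiW D (cconj \<phi>)) u (real_of_ereal (cconj g w) - K))
         = epiW D (cconj (\<lambda>x. usub (usub (\<phi> x) (eco D g x)) (ereal K)))"
proof (rule set_eqI)
  fix pr :: "'a W \<times> real"
  obtain p q \<beta> r where pr: "pr = ((p, q, \<beta>), r)" by (metis prod.exhaust)
  obtain x1 r1 where x1: "g x1 = ereal r1"
    using assms(2) unfolding proper_fn_def by (metis ereal_cases)
  have "(\<forall>u v \<gamma>. (u, v, \<gamma>) \<in> domW D (cconj g) \<longrightarrow>
          cconj \<phi> ((\<lambda>y. p y + u y), q, \<beta>) \<le> ereal (r + (real_of_ereal (cconj g (u, v, \<gamma>)) - K)))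
        \<longleftrightarrow> cconj (\<lambda>x. usub (usub (\<phi> x) (eco D g x)) (ereal K)) (p, q, \<beta>) \<le> ereal r"
    (is "?bounds \<longleftrightarrow> ?epi")
  proof
    assume ?bounds
    have "lsub (coup x (p, q, \<beta>)) (usub (usub (\<phi> x) (eco D g x)) (ereal K)) \<le> ereal r" for x
    proof (cases "\<phi> x = \<infinity>")
      case False
      moreover have "g x < \<infinity>" using False dom[of x] by (simp add: less_top)
      ultimately show ?thesis using \<open>?bounds\<close>
        by (intro lsub_coup_eco_le_of_conj_bounds[OF assms(1,2)]) (auto simp: cconj_le_iff)
    qed simp
    then show ?epi by (simp add: cconj_le_iff)
  next
    assume ?epi
    show ?bounds
    proof (intro allI impI)
      fix u v \<gamma> assume w: "(u, v, \<gamma>) \<in> domW D (cconj g)"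
      then obtain \<Gamma> where \<Gamma>: "cconj g (u, v, \<gamma>) = ereal \<Gamma>"
        using domW_cconj_real x1 by metis
      have "lsub (coup x ((\<lambda>y. p y + u y), q, \<beta>)) (\<phi> x) \<le> ereal (r + (\<Gamma> - K))" for x
      proof (cases "\<phi> x = \<infinity>")
        case False
        then have eco_finite: "eco D g x \<noteq> \<infinity>"
          using dom[of x] eco_le[of D g x] by (auto simp: less_top)
        have "ereal (u x - \<Gamma>) \<le> eco D g x"
          using coup_minus_cconj_le_eco[OF assms(1) w \<Gamma>, of x] eco_finite
          by (auto split: if_splits)
        moreover have "lsub (coup x (p, q, \<beta>)) (usub (usub (\<phi> x) (eco D g x)) (ereal K)) \<le> ereal r"
          by (rule order.trans[OF cconj_upper \<open>?epi\<close>])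
        ultimately show ?thesis using eco_finite by (intro lsub_coup_le_of_eco)
      qed simp
      then show "cconj \<phi> ((\<lambda>y. p y + u y), q, \<beta>)
                   \<le> ereal (r + (real_of_ereal (cconj g (u, v, \<gamma>)) - K))"
        using \<Gamma> by (simp add: cconj_le_iff)
    qed
  qed
  then show "pr \<in> (Wset D \<times> UNIV) \<inter> (\<Inter>w \<in> domW D (cconj g). case w of (u, v, \<gamma>) \<Rightarrow>
               shiftW (epiW D (cconj \<phi>)) u (real_of_ereal (cconj g w) - K))
        \<longleftrightarrow> pr \<in> epiW D (cconj (\<lambda>x. usub (usub (\<phi> x) (eco D g x)) (ereal K)))"
    using mem_inter_shiftW_epiW_iff[OF assms(1)] by (simp add: pr epiW_def)
qed

lemma usub_add_indic:
  assumes "a \<noteq> -\<infinity>" and "a \<noteq> \<infinity> \<Longrightarrow> e \<noteq> \<infinity>"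
  shows "usub (usub (a + indic A x) e) (ereal 0) = usub a e + indic A x"
  using assms by (cases a; cases e) (auto simp: indic_def usub_def)

theorem proposition5p4:
  fixes D :: "('x::real_vector \<Rightarrow> real) set"
    and f g :: "'x \<Rightarrow> ereal" and A :: "'x set"
  assumes "dual_pair D" and "\<exists>x::'x. x \<noteq> 0"
    and "proper_fn f" and "convex_fn f" and "proper_fn g" and "convex_fn g"
    and "domX f \<subseteq> domX g" and "A \<noteq> {}"
  shows "(Lambda_set D f g A
           = epiW D (cconj (\<lambda>x. usub (f x) (eco D g x) + indic A x))) \<and>
         (Omega_set D f g A
           = (\<Union>z \<in> domW D (cconj (indic A)). case z of (xs, ys, \<alpha>) \<Rightarrow>
               epiW D (cconj (\<lambda>x. usub (usub (usub (f x) (eco D g x)) (coup x (-xs, -ys, \<alpha>)))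
                                   (cconj (indic A) z)))))"
proof
  have f_fin: "f x \<noteq> -\<infinity>" for x using assms(3) by (simp add: proper_fn_def)
  have dom: "f x < \<infinity> \<Longrightarrow> g x < \<infinity>" for x using assms(7) by (auto simp: domX_def)
  have eco_fin: "f x \<noteq> \<infinity> \<Longrightarrow> eco D g x \<noteq> \<infinity>" for x
    using dom[of x] eco_le[of D g x] by (auto simp: less_top)
  note core = inter_shiftW_epiW_cconj_eq_epiW_cconj_diff_eco[OF assms(1,5)]
  have "(\<lambda>x. usub (usub (f x + indic A x) (eco D g x)) (ereal 0))
          = (\<lambda>x. usub (f x) (eco D g x) + indic A x)"
    using f_fin eco_fin by (simp add: usub_add_indic)
  moreover have "f x + indic A x < \<infinity> \<Longrightarrow> g x < \<infinity>" for x
    using dom f_fin by (auto simp: indic_def split: if_splits)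
  ultimately show "Lambda_set D f g A = epiW D (cconj (\<lambda>x. usub (f x) (eco D g x) + indic A x))"
    using core[of "\<lambda>x. f x + indic A x" 0] by (simp add: Lambda_set_def)
  obtain a where "a \<in> A" using assms(8) by blast
  then have indic_a: "indic A a = ereal 0" by (simp add: indic_def)
  show "Omega_set D f g A = (\<Union>z \<in> domW D (cconj (indic A)). case z of (xs, ys, \<alpha>) \<Rightarrow>
          epiW D (cconj (\<lambda>x. usub (usub (usub (f x) (eco D g x)) (coup x (-xs, -ys, \<alpha>)))
                              (cconj (indic A) z))))"
    unfolding Omega_set_def
  proof (rule SUP_cong[OF refl], clarify)
    fix xs ys \<alpha> assume z: "(xs, ys, \<alpha>) \<in> domW D (cconj (indic A))"
    then obtain K where K: "cconj (indic A) (xs, ys, \<alpha>) = ereal K"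
      using domW_cconj_real indic_a by metis
    have "usub (usub (usub (f x) (coup x (-xs, -ys, \<alpha>))) (eco D g x)) (ereal K)
            = usub (usub (usub (f x) (eco D g x)) (coup x (-xs, -ys, \<alpha>))) (ereal K)" for x
      using usub_commute[of "f x" "coup x (-xs, -ys, \<alpha>)" "eco D g x"] f_fin eco_fin by simp
    moreover have "usub (f x) (coup x (-xs, -ys, \<alpha>)) < \<infinity> \<Longrightarrow> g x < \<infinity>" for x
      using dom by (cases "f x") auto
    ultimately show "(Wset D \<times> UNIV) \<inter> (\<Inter>w \<in> domW D (cconj g). case w of (u, v, \<gamma>) \<Rightarrow>
          shiftW (epiW D (cconj (\<lambda>x. usub (f x) (coup x (-xs, -ys, \<alpha>))))) u
            (real_of_ereal (cconj g w) - real_of_ereal (cconj (indic A) (xs, ys, \<alpha>))))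
        = epiW D (cconj (\<lambda>x. usub (usub (usub (f x) (eco D g x)) (coup x (-xs, -ys, \<alpha>)))
                            (cconj (indic A) (xs, ys, \<alpha>))))"
      using core[of "\<lambda>x. usub (f x) (coup x (-xs, -ys, \<alpha>))" K] by (simp add: K)
  qed
qed

end
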